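(* Let $p\in\mathbb{R}[x_1,\ldots,x_n]_{2e}$ be a globally nonnegative homogeneous polynomial of degree $2e$ which is not a square, and let $h=y^2-p(x)$ where $y$ is a variable of degree $e$. If $h^r=\det(y\cdot I-A)$ for some $r\geq1$ and some real symmetric (resp. complex hermitian) matrix $A$ of size $2r$ whose entries are homogeneous polynomials of degree $e$ in $x_1,\ldots,x_n$, then $p$ is a sum of $2r$ squares in the symmetric case and a sum of $4r-1$ squares in the hermitian case. *)

theory Defs
  imports Complex_Main "Jordan_Normal_Form.Determinant"
begin

text \<open>Multivariate polynomials in the real variables x_0,...,x_(n-1) are represented
  by the polynomial functions they induce on points x :: nat => real (only the first
  n coordinates matter). Over the infinite field R this representation is faithful.\<close>

definition exps_hom :: "nat \<Rightarrow> nat \<Rightarrow> (nat \<Rightarrow> nat) set" where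
  "exps_hom n d = {\<alpha>. (\<forall>i\<ge>n. \<alpha> i = 0) \<and> (\<Sum>i<n. \<alpha> i) = d}"

definition exps_le :: "nat \<Rightarrow> nat \<Rightarrow> (nat \<Rightarrow> nat) set" where
  "exps_le n d = {\<alpha>. (\<forall>i\<ge>n. \<alpha> i = 0) \<and> (\<Sum>i<n. \<alpha> i) \<le> d}"

definition monom :: "nat \<Rightarrow> (nat \<Rightarrow> nat) \<Rightarrow> (nat \<Rightarrow> real) \<Rightarrow> 'a::{real_algebra_1,comm_ring_1}" where
  "monom n \<alpha> x = (\<Prod>i<n. of_real (x i) ^ \<alpha> i)"

definition hom_form :: "nat \<Rightarrow> nat \<Rightarrow> ((nat \<Rightarrow> real) \<Rightarrow> 'a::{real_algebra_1,comm_ring_1}) \<Rightarrow> bool" where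
  "hom_form n d f \<longleftrightarrow> (\<exists>c. \<forall>x. f x = (\<Sum>\<alpha>\<in>exps_hom n d. c \<alpha> * monom n \<alpha> x))"

definition is_poly :: "nat \<Rightarrow> ((nat \<Rightarrow> real) \<Rightarrow> 'a::{real_algebra_1,comm_ring_1}) \<Rightarrow> bool" where
  "is_poly n f \<longleftrightarrow> (\<exists>d c. \<forall>x. f x = (\<Sum>\<alpha>\<in>exps_le n d. c \<alpha> * monom n \<alpha> x))"

definition sum_of_squares :: "nat \<Rightarrow> nat \<Rightarrow> ((nat \<Rightarrow> real) \<Rightarrow> real) \<Rightarrow> bool" where
  "sum_of_squares n k p \<longleftrightarrow>
     (\<exists>q. (\<forall>i<k. is_poly n (q i)) \<and> (\<forall>x. p x = (\<Sum>i<k. (q i x)\<^sup>2)))"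

definition char_mat :: "nat \<Rightarrow> 'a \<Rightarrow> (nat \<Rightarrow> nat \<Rightarrow> (nat \<Rightarrow> real) \<Rightarrow> 'a::comm_ring_1)
      \<Rightarrow> (nat \<Rightarrow> real) \<Rightarrow> 'a mat" where
  "char_mat m y A x = mat m m (\<lambda>(i,j). (if i = j then y else 0) - A i j x)"

end

theory Submission
  imports Defs "Jordan_Normal_Form.Jordan_Normal_Form_Uniqueness" "Jordan_Normal_Form.Schur_Decomposition"
begin

(* At each point x the hermitian matrix A(x) has characteristic polynomial (y^2 - p(x))^r,
   so its eigenvalues are +-sqrt p(x); a hermitian matrix being diagonalisable, A(x)^2 = p(x) I.
   Comparing (0,0) entries gives p = sum_k |A_0k|^2: 2r squares of the forms A_0k in the
   symmetric case and, since A_00 is real, 1 + 2(2r - 1) = 4r - 1 squares of real and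
   imaginary parts in the hermitian case.
   Diagonalisability is replaced by a trace argument: for a Schur triangulation A = P B P^-1,
   C = A^2 - p I is similar to the strictly upper triangular B^2 - p I, so tr (C^2) = 0, and
   for hermitian C this trace is the sum of all |C_ik|^2. *)

lemma scalar_prod_row_col:
  assumes "dim_col A = dim_row B" "i < dim_row A" "j < dim_col B"
  shows "row A i \<bullet> col B j = (\<Sum>k<dim_col A. A $$ (i, k) * B $$ (k, j))"
  using assms by (auto simp: scalar_prod_def atLeast0LessThan intro!: sum.cong)

definition mat_trace :: "'a::comm_monoid_add mat \<Rightarrow> 'a" where
  "mat_trace A = (\<Sum>i<dim_row A. A $$ (i, i))"

lemma mat_trace_mult_comm:
  fixes A B :: "'a::comm_semiring_0 mat"
  assumes A: "A \<in> carrier_mat n m" and B: "B \<in> carrier_mat m n"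
  shows "mat_trace (A * B) = mat_trace (B * A)"
proof -
  have "mat_trace (A * B) = (\<Sum>i<n. \<Sum>k<m. A $$ (i, k) * B $$ (k, i))"
    using A B by (simp add: mat_trace_def scalar_prod_row_col)
  also have "\<dots> = (\<Sum>k<m. \<Sum>i<n. B $$ (k, i) * A $$ (i, k))"
    by (subst sum.swap) (simp add: mult.commute)
  also have "\<dots> = mat_trace (B * A)"
    using A B by (simp add: mat_trace_def scalar_prod_row_col)
  finally show ?thesis .
qed

lemma mat_trace_similar:
  fixes A B :: "'a::comm_ring_1 mat"
  assumes "similar_mat_wit A B P Q"
  shows "mat_trace A = mat_trace B"
proof -
  define n where "n = dim_row A"
  note wit = similar_mat_witD[OF n_def assms]
  have "mat_trace A = mat_trace (P * (B * Q))"
    using wit by simp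
  also have "\<dots> = mat_trace (B * Q * P)"
    using wit by (intro mat_trace_mult_comm) auto
  also have "B * Q * P = B"
    using wit by simp
  finally show ?thesis .
qed

lemma similar_mat_wit_square:
  assumes "similar_mat_wit A B P Q"
  shows "similar_mat_wit (A * A) (B * B) P Q"
  using similar_mat_wit_pow[OF assms, of 2] by (simp add: numeral_2_eq_2)

lemma index_char_matrix:
  assumes "i < dim_row A" "j < dim_row A"
  shows "char_matrix A e $$ (i, j) = A $$ (i, j) - (if i = j then e else 0)"
  using assms by (simp add: char_matrix_def)

lemma dim_char_matrix [simp]:
  "dim_row (char_matrix A e) = dim_row A" "dim_col (char_matrix A e) = dim_row A"
  by (simp_all add: char_matrix_def)

lemma smult_one_if_char_matrix_eq_0:
  assumes A: "A \<in> carrier_mat n n" and char: "char_matrix A e = 0\<^sub>m n n"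
  shows "A = e \<cdot>\<^sub>m 1\<^sub>m n"
proof (rule eq_matI)
  fix i j assume "i < dim_row (e \<cdot>\<^sub>m 1\<^sub>m n)" "j < dim_col (e \<cdot>\<^sub>m 1\<^sub>m n)"
  then have ij: "i < n" "j < n"
    by simp_all
  then have "char_matrix A e $$ (i, j) = 0"
    by (simp add: char)
  then show "A $$ (i, j) = (e \<cdot>\<^sub>m 1\<^sub>m n) $$ (i, j)"
    using A ij by (simp add: index_char_matrix)
qed (use A in simp_all)

lemma upper_triangular_mult:
  fixes A B :: "'a::semiring_0 mat"
  assumes A: "A \<in> carrier_mat n n" and B: "B \<in> carrier_mat n n"
    and ut: "upper_triangular A" "upper_triangular B"
  shows "upper_triangular (A * B)"
proof (rule upper_triangularI)
  fix i j assume ji: "j < i" and i: "i < dim_row (A * B)"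
  have "A $$ (i, k) * B $$ (k, j) = 0" if "k < n" for k
  proof (cases "k < i")
    case True
    then show ?thesis
      using upper_triangularD[OF ut(1) True] A i by simp
  next
    case False
    then show ?thesis
      using upper_triangularD[OF ut(2), of j k] B ji that by simp
  qed
  then show "(A * B) $$ (i, j) = 0"
    using A B ji i by (simp add: scalar_prod_row_col)
qed

lemma upper_triangular_mult_diag:
  fixes A B :: "'a::semiring_0 mat"
  assumes A: "A \<in> carrier_mat n n" and B: "B \<in> carrier_mat n n"
    and ut: "upper_triangular A" "upper_triangular B" and i: "i < n"
  shows "(A * B) $$ (i, i) = A $$ (i, i) * B $$ (i, i)"
proof -
  have off_diag: "A $$ (i, k) * B $$ (k, i) = 0" if "k < n" "k \<noteq> i" for k
  proof (cases "k < i")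
    case True
    then show ?thesis
      using upper_triangularD[OF ut(1) True] A i by simp
  next
    case False
    then show ?thesis
      using upper_triangularD[OF ut(2), of i k] B that by simp
  qed
  have "(A * B) $$ (i, i) = (\<Sum>k<n. A $$ (i, k) * B $$ (k, i))"
    using A B i by (simp add: scalar_prod_row_col)
  also have "\<dots> = A $$ (i, i) * B $$ (i, i) + (\<Sum>k\<in>{..<n} - {i}. A $$ (i, k) * B $$ (k, i))"
    by (rule sum.remove) (use i in auto)
  also have "(\<Sum>k\<in>{..<n} - {i}. A $$ (i, k) * B $$ (k, i)) = 0"
    using off_diag by (intro sum.neutral) auto
  finally show ?thesis
    by simp
qed

lemma upper_triangular_char_matrix:
  "upper_triangular A \<Longrightarrow> upper_triangular (char_matrix A e)"
  unfolding upper_triangular_def by (simp add: index_char_matrix)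

lemma mat_trace_square_strictly_upper_triangular:
  fixes N :: "'a::semiring_0 mat"
  assumes N: "N \<in> carrier_mat n n" and ut: "upper_triangular N"
    and diag: "\<And>i. i < n \<Longrightarrow> N $$ (i, i) = 0"
  shows "mat_trace (N * N) = 0"
proof -
  have "mat_trace (N * N) = (\<Sum>i<n. N $$ (i, i) * N $$ (i, i))"
    unfolding mat_trace_def using N upper_triangular_mult_diag[OF N N ut ut]
    by (simp del: index_mult_mat(1))
  also have "\<dots> = 0"
    using diag by simp
  finally show ?thesis .
qed

definition hermitian_mat :: "complex mat \<Rightarrow> bool" where
  "hermitian_mat A \<longleftrightarrow> (\<forall>i<dim_row A. \<forall>j<dim_row A. cnj (A $$ (i, j)) = A $$ (j, i))"

lemma hermitian_mat_mult_self:
  assumes A: "A \<in> carrier_mat n n" and herm: "hermitian_mat A"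
  shows "hermitian_mat (A * A)"
  unfolding hermitian_mat_def
proof (intro allI impI)
  fix i j assume "i < dim_row (A * A)" "j < dim_row (A * A)"
  then have i: "i < n" and j: "j < n"
    using A by auto
  have "(A * A) $$ (i, j) = (\<Sum>k<n. A $$ (i, k) * A $$ (k, j))"
    using A i j by (simp add: scalar_prod_row_col)
  then have "cnj ((A * A) $$ (i, j)) = (\<Sum>k<n. cnj (A $$ (i, k)) * cnj (A $$ (k, j)))"
    by (simp only: cnj_sum complex_cnj_mult)
  also have "\<dots> = (\<Sum>k<n. A $$ (j, k) * A $$ (k, i))"
    using herm A i j by (auto simp: hermitian_mat_def mult.commute intro!: sum.cong)
  also have "\<dots> = (A * A) $$ (j, i)"
    using A i j by (simp add: scalar_prod_row_col)
  finally show "cnj ((A * A) $$ (i, j)) = (A * A) $$ (j, i)" .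
qed

lemma hermitian_mat_char_matrix:
  "hermitian_mat A \<Longrightarrow> hermitian_mat (char_matrix A (of_real c))"
  by (simp add: hermitian_mat_def index_char_matrix)

lemma index_mult_self_hermitian_diag:
  assumes C: "C \<in> carrier_mat n n" and herm: "hermitian_mat C" and i: "i < n"
  shows "(C * C) $$ (i, i) = of_real (\<Sum>k<n. (cmod (C $$ (i, k)))\<^sup>2)"
proof -
  have "C $$ (i, k) * C $$ (k, i) = of_real ((cmod (C $$ (i, k)))\<^sup>2)" if "k < n" for k
  proof -
    have "C $$ (k, i) = cnj (C $$ (i, k))"
      using herm C i that by (simp add: hermitian_mat_def)
    then show ?thesis
      by (simp only: complex_norm_square)
  qed
  then show ?thesis
    using C i by (simp add: scalar_prod_row_col of_real_sum)
qed

lemma hermitian_mat_eq_0_if_trace_square_eq_0: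
  assumes C: "C \<in> carrier_mat n n" and herm: "hermitian_mat C"
    and tr: "mat_trace (C * C) = 0"
  shows "C = 0\<^sub>m n n"
proof -
  have "mat_trace (C * C) = of_real (\<Sum>i<n. \<Sum>k<n. (cmod (C $$ (i, k)))\<^sup>2)"
    unfolding mat_trace_def using C index_mult_self_hermitian_diag[OF C herm]
    by (simp add: of_real_sum del: index_mult_mat(1))
  with tr have "complex_of_real (\<Sum>i<n. \<Sum>k<n. (cmod (C $$ (i, k)))\<^sup>2) = 0"
    by (simp only:)
  then have "(\<Sum>i<n. \<Sum>k<n. (cmod (C $$ (i, k)))\<^sup>2) = 0"
    by (simp only: of_real_eq_0_iff)
  then have "\<forall>i\<in>{..<n}. (\<Sum>k<n. (cmod (C $$ (i, k)))\<^sup>2) = 0"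
    by (subst (asm) sum_nonneg_eq_0_iff) (auto intro: sum_nonneg)
  then have "C $$ (i, k) = 0" if "i < n" "k < n" for i k
    using that by (auto simp: sum_nonneg_eq_0_iff)
  then show ?thesis
    by (intro eq_matI) (use C in auto)
qed

lemma hermitian_square_eq_smult_one:
  assumes A: "A \<in> carrier_mat n n" and herm: "hermitian_mat A"
    and cp: "char_poly A = (\<Prod>e\<leftarrow>es. [:- e, 1:])"
    and roots: "\<And>e. e \<in> set es \<Longrightarrow> e * e = of_real c"
  shows "A * A = of_real c \<cdot>\<^sub>m 1\<^sub>m n"
proof -
  obtain B P Q where "schur_decomposition A es = (B, P, Q)"
    by (cases "schur_decomposition A es")
  with schur_decomposition[OF A cp] have sim: "similar_mat_wit A B P Q"
    and ut: "upper_triangular B" and diag: "diag_mat B = es"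
    by auto
  have B: "B \<in> carrier_mat n n"
    using similar_mat_witD2[OF A sim] by auto
  define C where "C = char_matrix (A * A) (of_real c)"
  define N where "N = char_matrix (B * B) (of_real c)"
  have C: "C \<in> carrier_mat n n" and N: "N \<in> carrier_mat n n"
    using A B by (auto simp: C_def N_def)
  have "similar_mat_wit C N P Q"
    unfolding C_def N_def by (intro similar_mat_wit_char_matrix similar_mat_wit_square sim)
  then have "mat_trace (C * C) = mat_trace (N * N)"
    by (intro mat_trace_similar similar_mat_wit_square)
  also have "\<dots> = 0"
  proof (rule mat_trace_square_strictly_upper_triangular[OF N])
    show "upper_triangular N"
      unfolding N_def by (intro upper_triangular_char_matrix upper_triangular_mult[OF B B ut ut])
  next
    fix i assume i: "i < n"
    then have "B $$ (i, i) \<in> set es"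
      using diag B by (auto simp: diag_mat_def)
    then show "N $$ (i, i) = 0"
      using B i roots upper_triangular_mult_diag[OF B B ut ut i]
      by (simp add: N_def index_char_matrix del: index_mult_mat(1))
  qed
  finally have "mat_trace (C * C) = 0" .
  moreover have "hermitian_mat C"
    unfolding C_def by (intro hermitian_mat_char_matrix hermitian_mat_mult_self[OF A herm])
  ultimately have "C = 0\<^sub>m n n"
    by (rule hermitian_mat_eq_0_if_trace_square_eq_0[OF C, rotated])
  then show ?thesis
    unfolding C_def by (rule smult_one_if_char_matrix_eq_0[OF mult_carrier_mat[OF A A]])
qed

lemma poly_eq_if_eq_on_reals:
  fixes f g :: "complex poly"
  assumes "\<And>y::real. poly f (of_real y) = poly g (of_real y)"
  shows "f = g"
proof (rule ccontr)
  assume "f \<noteq> g"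
  then have "finite {z. poly (f - g) z = 0}"
    by (intro poly_roots_finite) simp
  moreover have "range (of_real :: real \<Rightarrow> complex) \<subseteq> {z. poly (f - g) z = 0}"
    using assms by auto
  ultimately have "finite (range (of_real :: real \<Rightarrow> complex))"
    by (rule finite_subset[rotated])
  moreover have "inj (of_real :: real \<Rightarrow> complex)"
    by (simp add: inj_on_def)
  ultimately show False
    using finite_imageD infinite_UNIV_char_0 by blast
qed

lemma square_minus_power_factor:
  fixes s :: complex
  shows "[:- (s * s), 0, 1:] ^ r = (\<Prod>e\<leftarrow>replicate r s @ replicate r (- s). [:- e, 1:])"
proof -
  have "[:- (s * s), 0, 1:] = [:- s, 1:] * [:s, 1:]"
    by simp
  then have "[:- (s * s), 0, 1:] ^ r = [:- s, 1:] ^ r * [:s, 1:] ^ r"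
    by (simp only: power_mult_distrib)
  then show ?thesis
    by (simp add: prod_list_replicate)
qed

lemma hermitian_square_eq_of_det:
  assumes M: "M \<in> carrier_mat m m" and herm: "hermitian_mat M" and P: "P \<ge> 0"
    and det: "\<And>y::real. det (- char_matrix M (of_real y)) = of_real ((y\<^sup>2 - P) ^ r)"
  shows "M * M = of_real P \<cdot>\<^sub>m 1\<^sub>m m"
proof -
  define s where "s = complex_of_real (sqrt P)"
  have ss: "s * s = of_real P"
    using P by (simp add: s_def flip: of_real_mult)
  have "char_poly M = [:- (s * s), 0, 1:] ^ r"
    by (rule poly_eq_if_eq_on_reals) (simp add: char_poly_matrix[OF M] det ss power2_eq_square)
  then have "char_poly M = (\<Prod>e\<leftarrow>replicate r s @ replicate r (- s). [:- e, 1:])"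
    by (simp only: square_minus_power_factor)
  then show ?thesis
    by (rule hermitian_square_eq_smult_one[OF M herm]) (auto simp: ss)
qed

lemma char_mat_of_real:
  "char_mat m (complex_of_real y) (\<lambda>i j x. complex_of_real (A i j x)) x
     = map_mat complex_of_real (char_mat m y A x)"
  by (rule eq_matI) (auto simp: char_mat_def)

lemma row_norms_eq_if_det_char_mat:
  fixes A :: "nat \<Rightarrow> nat \<Rightarrow> (nat \<Rightarrow> real) \<Rightarrow> complex"
  assumes i: "i < m" and P: "P \<ge> 0"
    and herm: "\<And>i j. i < m \<Longrightarrow> j < m \<Longrightarrow> cnj (A i j x) = A j i x"
    and det: "\<And>y. complex_of_real ((y\<^sup>2 - P) ^ r) = det (char_mat m (complex_of_real y) A x)"
  shows "P = (\<Sum>k<m. (cmod (A i k x))\<^sup>2)"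
proof -
  define M where "M = mat m m (\<lambda>(i, j). A i j x)"
  have M: "M \<in> carrier_mat m m"
    by (simp add: M_def)
  have herm_M: "hermitian_mat M"
    using herm by (simp add: M_def hermitian_mat_def)
  have "- char_matrix M (of_real y) = char_mat m (of_real y) A x" for y
    by (rule eq_matI) (auto simp: M_def char_matrix_def char_mat_def)
  then have "det (- char_matrix M (of_real y)) = of_real ((y\<^sup>2 - P) ^ r)" for y
    by (simp only: det)
  then have "M * M = of_real P \<cdot>\<^sub>m 1\<^sub>m m"
    by (rule hermitian_square_eq_of_det[OF M herm_M P])
  then have "of_real P = (M * M) $$ (i, i)"
    using i by simp
  also have "\<dots> = of_real (\<Sum>k<m. (cmod (A i k x))\<^sup>2)"
    using index_mult_self_hermitian_diag[OF M herm_M i] i by (simp add: M_def)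
  finally show ?thesis
    by (simp only: of_real_eq_iff)
qed

lemma finite_exps_le: "finite (exps_le n d)"
proof (rule finite_subset)
  show "exps_le n d \<subseteq> {\<alpha>. \<forall>i. (i \<in> {..<n} \<longrightarrow> \<alpha> i \<in> {..d}) \<and> (i \<notin> {..<n} \<longrightarrow> \<alpha> i = 0)}"
  proof
    fix \<alpha> assume \<alpha>: "\<alpha> \<in> exps_le n d"
    have "\<alpha> i \<le> d" if "i < n" for i
      using \<alpha> member_le_sum[of i "{..<n}" \<alpha>] that by (simp add: exps_le_def)
    then show "\<alpha> \<in> {\<alpha>. \<forall>i. (i \<in> {..<n} \<longrightarrow> \<alpha> i \<in> {..d}) \<and> (i \<notin> {..<n} \<longrightarrow> \<alpha> i = 0)}"
      using \<alpha> by (simp add: exps_le_def)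
  qed
  show "finite {\<alpha>. \<forall>i. (i \<in> {..<n} \<longrightarrow> \<alpha> i \<in> {..d}) \<and> (i \<notin> {..<n} \<longrightarrow> (\<alpha> i :: nat) = 0)}"
    by (intro finite_set_of_finite_funs) simp_all
qed

lemma is_poly_if_hom_form:
  assumes "hom_form n d f"
  shows "is_poly n f"
proof -
  obtain c where c: "\<And>x. f x = (\<Sum>\<alpha>\<in>exps_hom n d. c \<alpha> * monom n \<alpha> x)"
    using assms unfolding hom_form_def by blast
  have f: "f x = (\<Sum>\<alpha>\<in>exps_le n d. (if \<alpha> \<in> exps_hom n d then c \<alpha> else 0) * monom n \<alpha> x)" for x
    unfolding c by (rule sum.mono_neutral_cong_left[OF finite_exps_le]) (auto simp: exps_hom_def exps_le_def)
  show ?thesis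
    unfolding is_poly_def by (intro exI allI) (rule f)
qed

lemma monom_complex_of_real: "(monom n \<alpha> x :: complex) = of_real (monom n \<alpha> x)"
  by (simp add: monom_def)

lemma hom_form_Re:
  assumes "hom_form n d f"
  shows "hom_form n d (\<lambda>x. Re (f x))"
proof -
  obtain c where "\<And>x. f x = (\<Sum>\<alpha>\<in>exps_hom n d. c \<alpha> * monom n \<alpha> x)"
    using assms unfolding hom_form_def by blast
  then have "Re (f x) = (\<Sum>\<alpha>\<in>exps_hom n d. Re (c \<alpha>) * monom n \<alpha> x)" for x
    by (simp add: Re_sum monom_complex_of_real)
  then show ?thesis
    unfolding hom_form_def by (intro exI allI)
qed

lemma hom_form_Im:
  assumes "hom_form n d f"
  shows "hom_form n d (\<lambda>x. Im (f x))"
proof -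
  obtain c where "\<And>x. f x = (\<Sum>\<alpha>\<in>exps_hom n d. c \<alpha> * monom n \<alpha> x)"
    using assms unfolding hom_form_def by blast
  then have "Im (f x) = (\<Sum>\<alpha>\<in>exps_hom n d. Im (c \<alpha>) * monom n \<alpha> x)" for x
    by (simp add: Im_sum monom_complex_of_real)
  then show ?thesis
    unfolding hom_form_def by (intro exI allI)
qed

lemma sum_of_squares_add:
  assumes "sum_of_squares n a p" "sum_of_squares n b q"
  shows "sum_of_squares n (a + b) (\<lambda>x. p x + q x)"
proof -
  obtain f g where f: "\<forall>i<a. is_poly n (f i)" "\<forall>x. p x = (\<Sum>i<a. (f i x)\<^sup>2)"
    and g: "\<forall>i<b. is_poly n (g i)" "\<forall>x. q x = (\<Sum>i<b. (g i x)\<^sup>2)"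
    using assms unfolding sum_of_squares_def by blast
  define h where "h i = (if i < a then f i else g (i - a))" for i
  have sum_h: "p x + q x = (\<Sum>i<a + b. (h i x)\<^sup>2)" for x
  proof -
    have "(\<Sum>i<a + b. (h i x)\<^sup>2) = (\<Sum>i<a. (h i x)\<^sup>2) + (\<Sum>i\<in>{a..<a + b}. (h i x)\<^sup>2)"
      using sum.atLeastLessThan_concat[of 0 a "a + b" "\<lambda>i. (h i x)\<^sup>2"] by (simp add: atLeast0LessThan)
    also have "(\<Sum>i\<in>{a..<a + b}. (h i x)\<^sup>2) = (\<Sum>i<b. (g i x)\<^sup>2)"
      by (simp add: sum.atLeastLessThan_shift_0[of _ a] h_def atLeast0LessThan)
    finally show ?thesis
      using f g by (simp add: h_def)
  qed
  show ?thesis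
    unfolding sum_of_squares_def
  proof (intro exI[of _ h] conjI allI impI)
    show "is_poly n (h i)" if "i < a + b" for i
      using f g that by (simp add: h_def)
  qed (rule sum_h)
qed

lemma sum_of_squares_sum_forms:
  fixes f :: "nat \<Rightarrow> (nat \<Rightarrow> real) \<Rightarrow> real"
  assumes "\<And>k. k < K \<Longrightarrow> hom_form n d (f k)"
  shows "sum_of_squares n K (\<lambda>x. \<Sum>k<K. (f k x)\<^sup>2)"
  unfolding sum_of_squares_def
proof (intro exI[of _ f] conjI allI impI refl)
  show "is_poly n (f k)" if "k < K" for k
    using assms[OF that] by (rule is_poly_if_hom_form)
qed

lemma sum_of_squares_if_symmetric_det_char_mat:
  fixes A :: "nat \<Rightarrow> nat \<Rightarrow> (nat \<Rightarrow> real) \<Rightarrow> real"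
  assumes m: "0 < m" and nonneg: "\<And>x. p x \<ge> 0"
    and hom: "\<And>i j. i < m \<Longrightarrow> j < m \<Longrightarrow> hom_form n e (A i j)"
    and sym: "\<And>i j. i < m \<Longrightarrow> j < m \<Longrightarrow> A i j = A j i"
    and det: "\<And>x y. (y\<^sup>2 - p x) ^ r = det (char_mat m y A x)"
  shows "sum_of_squares n m p"
proof -
  have "p x = (\<Sum>k<m. (cmod (complex_of_real (A 0 k x)))\<^sup>2)" for x
  proof (rule row_norms_eq_if_det_char_mat[where A = "\<lambda>i j x. complex_of_real (A i j x)", OF m nonneg])
    show "cnj (complex_of_real (A i j x)) = complex_of_real (A j i x)" if "i < m" "j < m" for i j
      using sym[OF that] by simp
    show "complex_of_real ((y\<^sup>2 - p x) ^ r)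
        = det (char_mat m (complex_of_real y) (\<lambda>i j x. complex_of_real (A i j x)) x)" for y
      by (simp only: char_mat_of_real of_real_hom.hom_det det[symmetric])
  qed
  then have "p = (\<lambda>x. \<Sum>k<m. (A 0 k x)\<^sup>2)"
    by auto
  then show ?thesis
    using sum_of_squares_sum_forms[where f = "A 0", OF hom[OF m]] by (simp only:)
qed

lemma sum_of_squares_if_hermitian_det_char_mat:
  fixes A :: "nat \<Rightarrow> nat \<Rightarrow> (nat \<Rightarrow> real) \<Rightarrow> complex"
  assumes m: "0 < m" and nonneg: "\<And>x. p x \<ge> 0"
    and hom: "\<And>i j. i < m \<Longrightarrow> j < m \<Longrightarrow> hom_form n e (A i j)"
    and herm: "\<And>i j x. i < m \<Longrightarrow> j < m \<Longrightarrow> A j i x = cnj (A i j x)"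
    and det: "\<And>x y. complex_of_real ((y\<^sup>2 - p x) ^ r) = det (char_mat m (complex_of_real y) A x)"
  shows "sum_of_squares n (2 * m - 1) p"
proof -
  have herm': "cnj (A i j x) = A j i x" if "i < m" "j < m" for i j x
    using herm[OF that, of x] by simp
  obtain K where K: "m = Suc K"
    using m gr0_implies_Suc by blast
  have im0: "Im (A 0 0 x) = 0" for x
    using arg_cong[OF herm'[OF m m, of x], of Im] by simp
  have "p x = (\<Sum>k<Suc K. (Re (A 0 k x))\<^sup>2) + (\<Sum>k<K. (Im (A 0 (Suc k) x))\<^sup>2)" for x
  proof -
    have "p x = (\<Sum>k<m. (cmod (A 0 k x))\<^sup>2)"
      by (rule row_norms_eq_if_det_char_mat[OF m nonneg herm' det])
    also have "\<dots> = (\<Sum>k<Suc K. (Re (A 0 k x))\<^sup>2) + (\<Sum>k<Suc K. (Im (A 0 k x))\<^sup>2)"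
      by (simp add: K cmod_power2 sum.distrib)
    also have "(\<Sum>k<Suc K. (Im (A 0 k x))\<^sup>2) = (\<Sum>k<K. (Im (A 0 (Suc k) x))\<^sup>2)"
      by (simp only: sum.lessThan_Suc_shift im0) simp
    finally show ?thesis .
  qed
  then have p_eq: "p = (\<lambda>x. (\<Sum>k<Suc K. (Re (A 0 k x))\<^sup>2) + (\<Sum>k<K. (Im (A 0 (Suc k) x))\<^sup>2))"
    by (rule ext)
  have re: "sum_of_squares n (Suc K) (\<lambda>x. \<Sum>k<Suc K. (Re (A 0 k x))\<^sup>2)"
  proof (rule sum_of_squares_sum_forms[where f = "\<lambda>k x. Re (A 0 k x)"])
    show "hom_form n e (\<lambda>x. Re (A 0 k x))" if "k < Suc K" for k
      by (rule hom_form_Re, rule hom) (use K that in simp_all)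
  qed
  have im: "sum_of_squares n K (\<lambda>x. \<Sum>k<K. (Im (A 0 (Suc k) x))\<^sup>2)"
  proof (rule sum_of_squares_sum_forms[where f = "\<lambda>k x. Im (A 0 (Suc k) x)"])
    show "hom_form n e (\<lambda>x. Im (A 0 (Suc k) x))" if "k < K" for k
      by (rule hom_form_Im, rule hom) (use K that in simp_all)
  qed
  have "2 * m - 1 = Suc K + K"
    using K by simp
  then show ?thesis
    unfolding p_eq by (simp only: sum_of_squares_add[OF re im])
qed

theorem lemma9p4:
  fixes n e :: nat and p :: "(nat \<Rightarrow> real) \<Rightarrow> real"
  assumes form: "hom_form n (2 * e) p"
    and nonneg: "\<forall>x. p x \<ge> 0"
    and not_square: "\<not> (\<exists>q :: (nat \<Rightarrow> real) \<Rightarrow> real. is_poly n q \<and> (\<forall>x. p x = (q x)\<^sup>2))"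
  shows
    "(\<forall>(r::nat) (A :: nat \<Rightarrow> nat \<Rightarrow> (nat \<Rightarrow> real) \<Rightarrow> real).
        r \<ge> 1
        \<and> (\<forall>i<2*r. \<forall>j<2*r. hom_form n e (A i j) \<and> A i j = A j i)
        \<and> (\<forall>x y. (y\<^sup>2 - p x) ^ r = det (char_mat (2*r) y A x))
        \<longrightarrow> sum_of_squares n (2*r) p)
     \<and>
     (\<forall>(r::nat) (A :: nat \<Rightarrow> nat \<Rightarrow> (nat \<Rightarrow> real) \<Rightarrow> complex).
        r \<ge> 1
        \<and> (\<forall>i<2*r. \<forall>j<2*r. hom_form n e (A i j) \<and> (\<forall>x. A j i x = cnj (A i j x)))
        \<and> (\<forall>x y. complex_of_real ((y\<^sup>2 - p x) ^ r) = det (char_mat (2*r) (complex_of_real y) A x))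
        \<longrightarrow> sum_of_squares n (4*r - 1) p)"
proof (intro conjI allI impI)
  fix r :: nat and A :: "nat \<Rightarrow> nat \<Rightarrow> (nat \<Rightarrow> real) \<Rightarrow> real"
  assume hyps: "r \<ge> 1
        \<and> (\<forall>i<2*r. \<forall>j<2*r. hom_form n e (A i j) \<and> A i j = A j i)
        \<and> (\<forall>x y. (y\<^sup>2 - p x) ^ r = det (char_mat (2*r) y A x))"
  then have "0 < 2 * r"
    by simp
  then show "sum_of_squares n (2 * r) p"
    by (rule sum_of_squares_if_symmetric_det_char_mat[where r = r]) (use nonneg hyps in blast)+
next
  fix r :: nat and A :: "nat \<Rightarrow> nat \<Rightarrow> (nat \<Rightarrow> real) \<Rightarrow> complex"
  assume hyps: "r \<ge> 1
        \<and> (\<forall>i<2*r. \<forall>j<2*r. hom_form n e (A i j) \<and> (\<forall>x. A j i x = cnj (A i j x)))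
        \<and> (\<forall>x y. complex_of_real ((y\<^sup>2 - p x) ^ r) = det (char_mat (2*r) (complex_of_real y) A x))"
  then have "0 < 2 * r"
    by simp
  then have "sum_of_squares n (2 * (2 * r) - 1) p"
    by (rule sum_of_squares_if_hermitian_det_char_mat[where r = r]) (use nonneg hyps in blast)+
  moreover have "2 * (2 * r) - 1 = 4 * r - 1"
    by simp
  ultimately show "sum_of_squares n (4 * r - 1) p"
    by (simp only:)
qed

end
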